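(* There exists a directed set $\mathcal A$, which is not a cardinal number, with $\operatorname{card}(\mathcal A)=\operatorname{cov}(\mathcal N)$, such that $\mathcal{ND}_{\mathcal A}$ is strongly $\mathfrak c$-algebrable in $\left(\mathbb R^{[0,1]}\right)^{\mathcal A}$.
   Context: A directed set is a nonempty set $\mathcal A$ with a reflexive transitive relation $\le$ in which any two elements have an upper bound; $x_A\to x$ if for each neighbourhood $U$ of $x$ there is $A_0$ with $x_A\in U$ for $A\ge A_0$. $\left(\mathbb R^{[0,1]}\right)^{\mathcal A}$ is the commutative real algebra of nets of functions $[0,1]\to\mathbb R$ with indexwise operations. $\lambda$ is Lebesgue measure, $\mathcal N$ the null subsets of $[0,1]$, $\operatorname{cov}(\mathcal N)$ the least size of a subfamily of $\mathcal N$ covering $[0,1]$. $\mathcal{ND}_{\mathcal A}$: nets of Lebesgue measurable $f_A:[0,1]\to\mathbb R$ such that there is an integrable $g$ with $|f_A|\le g$ a.e. for all $A$, $f_A\to f$ a.e. for some integrable $f$, and $\int|f_A-f|\,d\lambda$ does not converge to $0$. A subset $S$ of a commutative algebra is strongly $\kappa$-algebrable if there is a set $X$ of $\kappa$ algebraically independent elements such that every nonzero element of the (non-unital) algebra generated by $X$ belongs to $S$. *)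

theory Defs
  imports "HOL-Analysis.Analysis" "HOL-Library.Equipollence"
begin

definition directed_set :: "'a set \<Rightarrow> ('a \<Rightarrow> 'a \<Rightarrow> bool) \<Rightarrow> bool" where
  "directed_set A le \<longleftrightarrow> A \<noteq> {} \<and> (\<forall>a\<in>A. le a a)
     \<and> (\<forall>a\<in>A. \<forall>b\<in>A. \<forall>c\<in>A. le a b \<longrightarrow> le b c \<longrightarrow> le a c)
     \<and> (\<forall>a\<in>A. \<forall>b\<in>A. \<exists>c\<in>A. le a c \<and> le b c)"

definition dir_rel :: "'a set \<Rightarrow> ('a \<Rightarrow> 'a \<Rightarrow> bool) \<Rightarrow> 'a rel" where
  "dir_rel A le = {(a, b). a \<in> A \<and> b \<in> A \<and> le a b}"

definition net_tendsto :: "'a set \<Rightarrow> ('a \<Rightarrow> 'a \<Rightarrow> bool) \<Rightarrow> ('a \<Rightarrow> real) \<Rightarrow> real \<Rightarrow> bool" where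
  "net_tendsto A le x l \<longleftrightarrow>
     (\<forall>e>0. \<exists>a0\<in>A. \<forall>a\<in>A. le a0 a \<longrightarrow> \<bar>x a - l\<bar> < e)"

definition null_cover :: "real set set \<Rightarrow> bool" where
  "null_cover F \<longleftrightarrow> (\<forall>N\<in>F. N \<subseteq> {0..1} \<and> N \<in> null_sets lebesgue) \<and> {0..1} \<subseteq> \<Union>F"

text \<open>card S = cov(N): S is equipotent to some null cover, and injects into every null cover.\<close>
definition card_eq_covN :: "'a set \<Rightarrow> bool" where
  "card_eq_covN S \<longleftrightarrow> (\<exists>F. null_cover F \<and> S \<approx> F) \<and> (\<forall>F. null_cover F \<longrightarrow> S \<lesssim> F)"

text \<open>The class ND_A. A net is a function f with f a t the value of f_a at t.\<close>
definition ND :: "'a set \<Rightarrow> ('a \<Rightarrow> 'a \<Rightarrow> bool) \<Rightarrow> ('a \<Rightarrow> real \<Rightarrow> real) set" where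
  "ND A le = {f. (\<forall>a\<in>A. f a \<in> borel_measurable (lebesgue_on {0..1}))
     \<and> (\<exists>g. integrable (lebesgue_on {0..1}) g
            \<and> (\<forall>a\<in>A. AE t in lebesgue_on {0..1}. \<bar>f a t\<bar> \<le> g t))
     \<and> (\<exists>h. integrable (lebesgue_on {0..1}) h
            \<and> (AE t in lebesgue_on {0..1}. net_tendsto A le (\<lambda>a. f a t) (h t))
            \<and> \<not> net_tendsto A le
                 (\<lambda>a. integral\<^sup>L (lebesgue_on {0..1}) (\<lambda>t. \<bar>f a t - h t\<bar>)) 0)}"

text \<open>The ambient algebra (R^[0,1])^A, realised as functions vanishing outside A \<times> [0,1].\<close>
definition net_algebra :: "'a set \<Rightarrow> ('a \<Rightarrow> real \<Rightarrow> real) set" where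
  "net_algebra A = {x. \<forall>a t. (a \<notin> A \<or> t \<notin> {0..1}) \<longrightarrow> x a t = 0}"

text \<open>Polynomials in n variables without constant term, given by a finitely supported
  coefficient function on exponent vectors.\<close>
definition poly_nc :: "nat \<Rightarrow> ((nat \<Rightarrow> nat) \<Rightarrow> real) \<Rightarrow> bool" where
  "poly_nc n c \<longleftrightarrow> finite {e. c e \<noteq> 0}
     \<and> (\<forall>e. c e \<noteq> 0 \<longrightarrow> (\<forall>i\<ge>n. e i = 0) \<and> e \<noteq> (\<lambda>_. 0))"

definition poly_eval :: "nat \<Rightarrow> ((nat \<Rightarrow> nat) \<Rightarrow> real) \<Rightarrow> (nat \<Rightarrow> 'a \<Rightarrow> real \<Rightarrow> real) \<Rightarrow> 'a \<Rightarrow> real \<Rightarrow> real" where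
  "poly_eval n c x = (\<lambda>a t. \<Sum>e\<in>{e. c e \<noteq> 0}. c e * (\<Prod>i<n. (x i a t) ^ e i))"

text \<open>Strong kappa-algebrability of S in the algebra Alg (kappa given as a set K of that
  cardinality): there is X \<subseteq> Alg with X \<approx> K such that for distinct x_1..x_n in X and every
  nonzero polynomial P without constant term, P(x_1..x_n) is a nonzero element of S.
  (This expresses both algebraic independence of X and that every nonzero element of the
  generated algebra lies in S.)\<close>
definition strongly_algebrable :: "('a \<Rightarrow> real \<Rightarrow> real) set \<Rightarrow> ('a \<Rightarrow> real \<Rightarrow> real) set \<Rightarrow> 'k set \<Rightarrow> bool" where
  "strongly_algebrable Alg S K \<longleftrightarrow> (\<exists>X. X \<subseteq> Alg \<and> X \<approx> K \<and>
     (\<forall>n x c. x ` {..<n} \<subseteq> X \<and> inj_on x {..<n} \<and> poly_nc n c \<and> c \<noteq> (\<lambda>_. 0) \<longrightarrow>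
        poly_eval n c x \<in> S \<and> poly_eval n c x \<noteq> (\<lambda>_ _. 0)))"

end

theory Submission
  imports Defs "HOL-Algebra.Free_Abelian_Groups"
begin

text \<open>
  Take a null cover of \<open>[0,1]\<close> of least cardinality \<open>cov(\<N>)\<close> and close it under finite
  unions; this does not change its cardinality. Indexing every member twice by reals and
  ordering the indices by inclusion of the indexed null sets \<open>\<Phi> a\<close> gives a directed set of
  size \<open>cov(\<N>)\<close> that is not antisymmetric, hence not a cardinal.

  The generators are the nets \<open>a \<mapsto> g\<^sub>s \<cdot> 1\<^bsub>\<Phi> a\<^esub>\<close> for \<open>g\<^sub>s(t) = exp (- t powr (- exp s))\<close>,
  \<open>s \<in> \<real>\<close>. A polynomial without constant term in finitely many of them is the net
  \<open>a \<mapsto> P \<cdot> 1\<^bsub>\<Phi> a\<^esub>\<close>, where \<open>P\<close> is a linear combination of functions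
  \<open>exp (- \<Sum>\<^sub>i e\<^sub>i t powr (- \<rho>\<^sub>i))\<close> with distinct exponent vectors \<open>e\<close> and distinct \<open>\<rho>\<^sub>i > 0\<close>.
  Any two of these decay at \<open>0\<close> at different rates, so one term dominates and \<open>P\<close> does not
  vanish near \<open>0\<close>. The net converges to \<open>P\<close> at every point of \<open>[0,1]\<close>, because the
  \<open>\<Phi> a\<close> exhaust \<open>[0,1]\<close>, but \<open>\<integral>|P \<cdot> 1\<^bsub>\<Phi> a\<^esub> - P| = \<integral>|P| > 0\<close> for every \<open>a\<close>, because each \<open>\<Phi> a\<close> is null.
\<close>

lemma null_cover_singletons: "null_cover ((\<lambda>x. {x}) ` {0..(1::real)})"
  unfolding null_cover_def by auto

lemma least_null_cover: "\<exists>F. null_cover F \<and> (\<forall>G. null_cover G \<longrightarrow> F \<lesssim> G)"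
proof -
  let ?R = "card_of ` {F. null_cover F}"
  have "?R \<noteq> {}" using null_cover_singletons by blast
  moreover have "\<forall>r\<in>?R. Card_order r" using card_of_Card_order by blast
  ultimately obtain r where "r \<in> ?R" "\<forall>r'\<in>?R. r \<le>o r'"
    using exists_minim_Card_order[of ?R] by blast
  then obtain F where "null_cover F" "\<forall>G. null_cover G \<longrightarrow> |F| \<le>o |G|" by blast
  then show ?thesis unfolding lepoll_def by (metis card_of_ordLeq)
qed

lemma null_cover_infinite:
  assumes "null_cover F" shows "infinite F"
proof
  assume "finite F"
  moreover have "F \<subseteq> null_sets lebesgue" using assms unfolding null_cover_def by blast
  ultimately have "\<Union>F \<in> null_sets lebesgue" by (rule null_sets.finite_Union)
  moreover have "{0..1::real} \<subseteq> \<Union>F" using assms unfolding null_cover_def by blast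
  ultimately have "{0..1::real} \<in> null_sets lebesgue"
    using null_sets_subset[of "\<Union>F" lebesgue "{0..1}"] by simp
  moreover have "emeasure lebesgue {0..1::real} = 1"
    by (subst emeasure_completion) (simp_all add: emeasure_lborel_Icc_eq)
  ultimately show False by (simp add: null_sets_def)
qed

lemma null_cover_finite_unions:
  assumes "null_cover F" shows "null_cover (Union ` Fpow F)"
  unfolding null_cover_def
proof (rule conjI)
  show "\<forall>u\<in>Union ` Fpow F. u \<subseteq> {0..1} \<and> u \<in> null_sets lebesgue"
  proof
    fix u assume "u \<in> Union ` Fpow F"
    then obtain G where G: "u = \<Union>G" "G \<subseteq> F" "finite G" by (auto simp: Fpow_def)
    then have "\<forall>N\<in>G. N \<subseteq> {0..1} \<and> N \<in> null_sets lebesgue"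
      using assms unfolding null_cover_def by blast
    moreover from this have "\<Union>G \<in> null_sets lebesgue"
      using G(3) by (intro null_sets.finite_Union) auto
    ultimately show "u \<subseteq> {0..1} \<and> u \<in> null_sets lebesgue" using G(1) by blast
  qed
  have "F \<subseteq> Union ` Fpow F"
  proof
    fix N assume "N \<in> F"
    then show "N \<in> Union ` Fpow F" by (intro image_eqI[of _ _ "{N}"]) (auto simp: Fpow_def)
  qed
  then have "\<Union>F \<subseteq> \<Union>(Union ` Fpow F)" by (rule Union_mono)
  moreover have "{0..1} \<subseteq> \<Union>F" using assms unfolding null_cover_def by simp
  ultimately show "{0..1} \<subseteq> \<Union>(Union ` Fpow F)" by (rule order_trans[rotated])
qed

lemma Union_Fpow_Un_closed:
  assumes "u \<in> Union ` Fpow F" "v \<in> Union ` Fpow F" shows "u \<union> v \<in> Union ` Fpow F"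
proof -
  obtain G H where "G \<in> Fpow F" "H \<in> Fpow F" "u = \<Union>G" "v = \<Union>H" using assms by blast
  then show ?thesis by (intro image_eqI[of _ _ "G \<union> H"]) (auto simp: Fpow_def)
qed

lemma infinite_Union_Fpow_lepoll: "infinite F \<Longrightarrow> Union ` Fpow F \<lesssim> F"
  by (rule lepoll_trans2[OF image_lepoll eqpoll_Fpow])

lemma exists_double_indexing:
  assumes "infinite U" and "U \<lesssim> (UNIV :: 'b set)"
  shows "\<exists>(A :: 'b set) \<Phi>. \<Phi> ` A = U \<and> \<not> inj_on \<Phi> A \<and> A \<approx> U"
proof -
  have "|UNIV :: bool set| \<le>o |U|"
    using finite_lepoll_infinite[OF assms(1), of "UNIV :: bool set"] card_of_ordLeq
    unfolding lepoll_def by auto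
  then have UB: "U \<times> (UNIV :: bool set) \<approx> U"
    using card_of_Times_infinite[OF assms(1)] eqpoll_iff_card_of_ordIso by auto
  then obtain \<iota> :: "'a \<times> bool \<Rightarrow> 'b" where inj: "inj_on \<iota> (U \<times> UNIV)"
    using lepoll_trans1[OF UB assms(2)] unfolding lepoll_def by blast
  define A where "A = \<iota> ` (U \<times> UNIV)"
  define \<Phi> where "\<Phi> a = fst (inv_into (U \<times> UNIV) \<iota> a)" for a
  have \<Phi>_\<iota>: "\<Phi> (\<iota> (u, b)) = u" if "u \<in> U" for u b
    unfolding \<Phi>_def using inj that by simp
  obtain u where u: "u \<in> U" using assms(1) by fastforce
  have "\<Phi> ` A = U" unfolding A_def by (force simp: \<Phi>_\<iota>)
  moreover have "\<not> inj_on \<Phi> A"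
  proof
    assume "inj_on \<Phi> A"
    moreover have "\<iota> (u, True) \<noteq> \<iota> (u, False)" using inj u unfolding inj_on_def by blast
    ultimately show False using u \<Phi>_\<iota> unfolding A_def inj_on_def by auto
  qed
  moreover have "A \<approx> U" unfolding A_def by (rule eqpoll_trans[OF inj_on_image_eqpoll_self[OF inj] UB])
  ultimately show ?thesis by blast
qed

lemma exists_directed_null_cover_of_size_covN:
  "\<exists>(A :: real set) \<Phi>. null_cover (\<Phi> ` A) \<and> (\<forall>a\<in>A. \<forall>b\<in>A. \<exists>c\<in>A. \<Phi> a \<union> \<Phi> b \<subseteq> \<Phi> c)
     \<and> \<not> inj_on \<Phi> A \<and> card_eq_covN A"
proof -
  obtain F where F: "null_cover F" and F_least: "\<forall>G. null_cover G \<longrightarrow> F \<lesssim> G"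
    using least_null_cover by blast
  define U where "U = Union ` Fpow F"
  have U: "null_cover U" unfolding U_def by (rule null_cover_finite_unions[OF F])
  have UF: "U \<lesssim> F" unfolding U_def by (rule infinite_Union_Fpow_lepoll[OF null_cover_infinite[OF F]])
  have "F \<lesssim> (\<lambda>x. {x}) ` {0..(1::real)}" using F_least null_cover_singletons by blast
  also have "\<dots> \<lesssim> {0..(1::real)}" by (rule image_lepoll)
  also have "\<dots> \<lesssim> (UNIV :: real set)" by (rule subset_imp_lepoll) simp
  finally have "U \<lesssim> (UNIV :: real set)" by (rule lepoll_trans[OF UF])
  then obtain A :: "real set" and \<Phi> where A: "\<Phi> ` A = U" "\<not> inj_on \<Phi> A" "A \<approx> U"
    using exists_double_indexing[OF null_cover_infinite[OF U]] by blast
  have directed: "\<forall>a\<in>A. \<forall>b\<in>A. \<exists>c\<in>A. \<Phi> a \<union> \<Phi> b \<subseteq> \<Phi> c"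
  proof (intro ballI)
    fix a b assume "a \<in> A" "b \<in> A"
    then have "\<Phi> a \<in> U" "\<Phi> b \<in> U" using A(1) by auto
    then have "\<Phi> a \<union> \<Phi> b \<in> U" unfolding U_def by (rule Union_Fpow_Un_closed)
    then obtain c where "c \<in> A" "\<Phi> c = \<Phi> a \<union> \<Phi> b" using A(1) by (metis imageE)
    then show "\<exists>c\<in>A. \<Phi> a \<union> \<Phi> b \<subseteq> \<Phi> c" by blast
  qed
  have "A \<lesssim> G" if "null_cover G" for G
    using eqpoll_imp_lepoll[OF A(3)] UF F_least that by (blast intro: lepoll_trans)
  then have "card_eq_covN A" using A(3) U unfolding card_eq_covN_def by blast
  then show ?thesis using U A(1,2) directed by (intro exI[of _ A] exI[of _ \<Phi>]) simp
qed

lemma directed_set_inclusion_order: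
  assumes "A \<noteq> {}" and "\<forall>a\<in>A. \<forall>b\<in>A. \<exists>c\<in>A. \<Phi> a \<union> \<Phi> b \<subseteq> \<Phi> c"
  shows "directed_set A (\<lambda>a b. \<Phi> a \<subseteq> \<Phi> b)"
  using assms unfolding directed_set_def by blast

lemma not_card_order_inclusion_order:
  assumes "\<not> inj_on \<Phi> A" shows "\<not> card_order_on A (dir_rel A (\<lambda>a b. \<Phi> a \<subseteq> \<Phi> b))"
proof
  assume "card_order_on A (dir_rel A (\<lambda>a b. \<Phi> a \<subseteq> \<Phi> b))"
  then have "antisym (dir_rel A (\<lambda>a b. \<Phi> a \<subseteq> \<Phi> b))"
    unfolding card_order_on_def well_order_on_def linear_order_on_def partial_order_on_def by blast
  with assms show False unfolding antisym_def dir_rel_def inj_on_def by auto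
qed

lemma powr_sum_at_top_or_at_bot:
  fixes d \<rho> :: "nat \<Rightarrow> real"
  assumes inj: "inj_on \<rho> {..<n}" and pos: "\<forall>i<n. \<rho> i > 0" and nz: "\<exists>i<n. d i \<noteq> 0"
  shows "filterlim (\<lambda>u. \<Sum>i<n. d i * u powr \<rho> i) at_top at_top
       \<or> filterlim (\<lambda>u. \<Sum>i<n. d i * u powr \<rho> i) at_bot at_top"
proof -
  define I where "I = {i. i < n \<and> d i \<noteq> 0}"
  have "finite I" "I \<noteq> {}" using nz unfolding I_def by auto
  then have "Max (\<rho> ` I) \<in> \<rho> ` I" by simp
  then obtain j where j: "j \<in> I" and j_Max: "\<rho> j = Max (\<rho> ` I)" by (metis imageE)
  have j_max: "\<rho> i < \<rho> j" if "i \<in> I" "i \<noteq> j" for i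
  proof -
    have "\<rho> i \<le> \<rho> j" using \<open>finite I\<close> that(1) unfolding j_Max by simp
    moreover have "\<rho> i \<noteq> \<rho> j" using inj that j unfolding I_def inj_on_def by auto
    ultimately show ?thesis by simp
  qed
  have jn: "j < n" and dj: "d j \<noteq> 0" using j unfolding I_def by auto
  define h where "h u = (\<Sum>i<n. d i * u powr (\<rho> i - \<rho> j))" for u
  have "((\<lambda>u. d i * u powr (\<rho> i - \<rho> j)) \<longlongrightarrow> (if i = j then d j else 0)) at_top"
    if "i < n" for i
  proof (cases "i = j \<or> d i = 0")
    case True
    have "\<forall>\<^sub>F u in at_top. d i * u powr (\<rho> i - \<rho> j) = (if i = j then d j else 0)"
      using eventually_gt_at_top[of 0] by eventually_elim (use True in auto)
    then show ?thesis by (rule tendsto_eventually)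
  next
    case False
    then have "\<rho> i - \<rho> j < 0" using j_max that unfolding I_def by simp
    then have "((\<lambda>u. u powr (\<rho> i - \<rho> j)) \<longlongrightarrow> 0) at_top"
      by (intro tendsto_neg_powr filterlim_ident)
    then show ?thesis using tendsto_mult_right_zero[of _ _ "d i"] False by simp
  qed
  then have "(h \<longlongrightarrow> (\<Sum>i<n. if i = j then d j else 0)) at_top"
    unfolding h_def by (intro tendsto_sum) simp
  then have h_lim: "(h \<longlongrightarrow> d j) at_top" using jn by simp
  have "\<forall>\<^sub>F u in at_top. h u * u powr \<rho> j = (\<Sum>i<n. d i * u powr \<rho> i)"
    using eventually_gt_at_top[of 0]
  proof eventually_elim
    case (elim u)
    then show ?case unfolding h_def sum_distrib_right by (intro sum.cong refl) (simp add: powr_diff)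
  qed
  then have same_limit: "filterlim (\<lambda>u. h u * u powr \<rho> j) G at_top
      \<longleftrightarrow> filterlim (\<lambda>u. \<Sum>i<n. d i * u powr \<rho> i) G at_top" for G
    by (rule filterlim_cong[OF refl refl])
  have power_lim: "filterlim (\<lambda>u. u powr \<rho> j) at_top at_top"
    using pos jn by (intro real_powr_at_top) simp
  then have "filterlim (\<lambda>u. h u * u powr \<rho> j) at_top at_top
           \<or> filterlim (\<lambda>u. h u * u powr \<rho> j) at_bot at_top"
  proof (cases "d j > 0")
    case True
    then show ?thesis using filterlim_tendsto_pos_mult_at_top[OF h_lim] power_lim by blast
  next
    case False
    then have "d j < 0" using dj by simp
    then show ?thesis using filterlim_tendsto_neg_mult_at_bot[OF h_lim] power_lim by blast
  qed
  then show ?thesis unfolding same_limit .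
qed

definition exp_monomial :: "(nat \<Rightarrow> real) \<Rightarrow> nat \<Rightarrow> (nat \<Rightarrow> nat) \<Rightarrow> real \<Rightarrow> real" where
  "exp_monomial \<rho> n e t = exp (- (\<Sum>i<n. real (e i) * inverse t powr \<rho> i))"

lemma exp_monomial_pos: "0 < exp_monomial \<rho> n e t"
  unfolding exp_monomial_def by simp

lemma exp_monomial_le_1: "exp_monomial \<rho> n e t \<le> 1"
  unfolding exp_monomial_def by (simp add: sum_nonneg)

lemma exp_monomial_measurable [measurable]: "exp_monomial \<rho> n e \<in> borel_measurable (lebesgue_on S)"
proof -
  have [measurable]: "(\<lambda>t::real. t) \<in> borel_measurable (lebesgue_on S)"
    using id_borel_measurable_lebesgue_on unfolding id_def .
  show ?thesis unfolding exp_monomial_def by measurable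
qed

lemma tendsto_exp_neg_inverse:
  fixes D :: "real \<Rightarrow> real"
  assumes "filterlim D at_top at_top"
  shows "((\<lambda>t. exp (- D (inverse t))) \<longlongrightarrow> (0::real)) (at_right 0)"
proof -
  have "((\<lambda>u. exp (- D u)) \<longlongrightarrow> (0::real)) at_top"
    using assms by (intro filterlim_compose[OF exp_at_bot]) (simp add: filterlim_uminus_at_bot)
  then show ?thesis by (intro filterlim_at_right_to_top[THEN iffD2]) simp
qed

lemma exp_monomial_ratio_tendsto_0:
  assumes inj: "inj_on \<rho> {..<n}" and pos: "\<forall>i<n. \<rho> i > 0"
    and supp: "\<forall>i\<ge>n. e i = 0" "\<forall>i\<ge>n. e' i = 0" and "e \<noteq> e'"
  shows "((\<lambda>t. exp_monomial \<rho> n e t / exp_monomial \<rho> n e' t) \<longlongrightarrow> 0) (at_right 0)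
       \<or> ((\<lambda>t. exp_monomial \<rho> n e' t / exp_monomial \<rho> n e t) \<longlongrightarrow> 0) (at_right 0)"
proof -
  define D where "D u = (\<Sum>i<n. (real (e i) - real (e' i)) * u powr \<rho> i)" for u
  have "\<exists>i<n. real (e i) - real (e' i) \<noteq> 0"
    using supp \<open>e \<noteq> e'\<close> by (metis eq_iff_diff_eq_0 ext not_le of_nat_eq_iff)
  then have "filterlim D at_top at_top \<or> filterlim (\<lambda>u. - D u) at_top at_top"
    using powr_sum_at_top_or_at_bot[OF inj pos] unfolding D_def by (simp add: filterlim_uminus_at_bot)
  moreover have "exp_monomial \<rho> n e t / exp_monomial \<rho> n e' t = exp (- D (inverse t))" for t
    unfolding exp_monomial_def D_def
    by (simp add: exp_diff[symmetric] left_diff_distrib sum_subtractf)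
  moreover have "exp_monomial \<rho> n e' t / exp_monomial \<rho> n e t = exp (- (- D (inverse t)))" for t
    unfolding exp_monomial_def D_def
    by (simp add: exp_diff[symmetric] left_diff_distrib sum_subtractf)
  ultimately show ?thesis
    using tendsto_exp_neg_inverse[of D] tendsto_exp_neg_inverse[of "\<lambda>u. - D u"] by presburger
qed

lemma lincomb_div_dominant_tendsto:
  fixes M :: "'e \<Rightarrow> 'b \<Rightarrow> real"
  assumes "finite E" "E \<noteq> {}" "E \<subseteq> S"
    and nz: "\<And>e t. M e t \<noteq> 0"
    and comparable: "\<And>e e'. e \<in> S \<Longrightarrow> e' \<in> S \<Longrightarrow> e \<noteq> e' \<Longrightarrow>
       ((\<lambda>t. M e t / M e' t) \<longlongrightarrow> 0) F \<or> ((\<lambda>t. M e' t / M e t) \<longlongrightarrow> 0) F"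
  shows "\<exists>e\<in>E. ((\<lambda>t. (\<Sum>e'\<in>E. c e' * M e' t) / M e t) \<longlongrightarrow> c e) F"
  using assms(1-3)
proof (induction E rule: finite_ne_induct)
  case (singleton x)
  then show ?case using nz by simp
next
  case (insert x E)
  then obtain y where y: "y \<in> E" and lim: "((\<lambda>t. (\<Sum>e'\<in>E. c e' * M e' t) / M y t) \<longlongrightarrow> c y) F"
    by auto
  have sum_insert: "(\<Sum>e'\<in>insert x E. c e' * M e' t) = c x * M x t + (\<Sum>e'\<in>E. c e' * M e' t)" for t
    using insert.hyps by simp
  have "x \<noteq> y" "x \<in> S" "y \<in> S" using insert y by auto
  from comparable[OF this(2,3,1)] show ?case
  proof
    assume "((\<lambda>t. M x t / M y t) \<longlongrightarrow> 0) F"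
    then have "((\<lambda>t. c x * (M x t / M y t) + (\<Sum>e'\<in>E. c e' * M e' t) / M y t) \<longlongrightarrow> c x * 0 + c y) F"
      by (intro tendsto_intros lim)
    then show ?thesis using y by (intro bexI[of _ y]) (auto simp: sum_insert add_divide_distrib)
  next
    assume "((\<lambda>t. M y t / M x t) \<longlongrightarrow> 0) F"
    then have "((\<lambda>t. c x + ((\<Sum>e'\<in>E. c e' * M e' t) / M y t) * (M y t / M x t)) \<longlongrightarrow> c x + c y * 0) F"
      by (intro tendsto_intros lim)
    moreover have "c x + ((\<Sum>e'\<in>E. c e' * M e' t) / M y t) * (M y t / M x t)
        = (\<Sum>e'\<in>insert x E. c e' * M e' t) / M x t" for t
      unfolding sum_insert using nz[of x t] nz[of y t] by (simp add: field_simps)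
    ultimately show ?thesis by (intro bexI[of _ x]) auto
  qed
qed

lemma exp_monomial_lincomb_nonzero_near_0:
  fixes c :: "(nat \<Rightarrow> nat) \<Rightarrow> real"
  assumes "finite E" "E \<noteq> {}" "\<forall>e\<in>E. c e \<noteq> 0" "\<forall>e\<in>E. \<forall>i\<ge>n. e i = 0"
    and "inj_on \<rho> {..<n}" "\<forall>i<n. \<rho> i > 0"
  shows "\<exists>\<delta>>0. \<forall>t. 0 < t \<and> t < \<delta> \<longrightarrow> (\<Sum>e\<in>E. c e * exp_monomial \<rho> n e t) \<noteq> 0"
proof -
  have "\<exists>e\<in>E. ((\<lambda>t. (\<Sum>e'\<in>E. c e' * exp_monomial \<rho> n e' t) / exp_monomial \<rho> n e t) \<longlongrightarrow> c e) (at_right 0)"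
  proof (rule lincomb_div_dominant_tendsto[OF assms(1,2) order_refl])
    show "exp_monomial \<rho> n e t \<noteq> 0" for e t using exp_monomial_pos[of \<rho> n e t] by simp
    show "((\<lambda>t. exp_monomial \<rho> n e t / exp_monomial \<rho> n e' t) \<longlongrightarrow> 0) (at_right 0)
        \<or> ((\<lambda>t. exp_monomial \<rho> n e' t / exp_monomial \<rho> n e t) \<longlongrightarrow> 0) (at_right 0)"
      if "e \<in> E" "e' \<in> E" "e \<noteq> e'" for e e'
      using exp_monomial_ratio_tendsto_0[OF assms(5,6)] assms(4) that by blast
  qed
  then obtain e where "e \<in> E"
    and lim: "((\<lambda>t. (\<Sum>e'\<in>E. c e' * exp_monomial \<rho> n e' t) / exp_monomial \<rho> n e t) \<longlongrightarrow> c e) (at_right 0)"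
    by blast
  have "\<forall>\<^sub>F t in at_right 0. (\<Sum>e'\<in>E. c e' * exp_monomial \<rho> n e' t) / exp_monomial \<rho> n e t \<noteq> 0"
    using tendsto_imp_eventually_ne[OF lim] assms(3) \<open>e \<in> E\<close> by blast
  then have "\<forall>\<^sub>F t in at_right (0::real). (\<Sum>e'\<in>E. c e' * exp_monomial \<rho> n e' t) \<noteq> 0"
    by eventually_elim auto
  then show ?thesis unfolding eventually_at_right_field by auto
qed

definition generator :: "real \<Rightarrow> real \<Rightarrow> real" where
  "generator s t = exp (- (inverse t powr exp s))"

lemma prod_generator_power:
  "(\<Prod>i<n. generator (\<sigma> i) t ^ e i) = exp_monomial (\<lambda>i. exp (\<sigma> i)) n e t"
proof -
  have "exp_monomial (\<lambda>i. exp (\<sigma> i)) n e t = (\<Prod>i<n. exp (real (e i) * - (inverse t powr exp (\<sigma> i))))"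
    unfolding exp_monomial_def by (simp add: exp_sum sum_negf[symmetric])
  also have "\<dots> = (\<Prod>i<n. generator (\<sigma> i) t ^ e i)"
    unfolding generator_def by (simp add: exp_of_nat_mult[symmetric])
  finally show ?thesis ..
qed

lemma generator_half_eq_iff: "generator s (1/2) = generator s' (1/2) \<longleftrightarrow> s = s'"
proof
  assume "generator s (1/2) = generator s' (1/2)"
  then have "(2::real) powr exp s = 2 powr exp s'" by (simp add: generator_def)
  then show "s = s'" by (simp add: powr_inj)
qed simp

definition generator_net :: "'a set \<Rightarrow> ('a \<Rightarrow> real set) \<Rightarrow> real \<Rightarrow> 'a \<Rightarrow> real \<Rightarrow> real" where
  "generator_net A \<Phi> s = (\<lambda>a t. if a \<in> A \<and> t \<in> \<Phi> a then generator s t else 0)"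

lemma poly_eval_generator_net:
  assumes x: "\<forall>i<n. x i = generator_net A \<Phi> (\<sigma> i)" and "poly_nc n c"
  shows "poly_eval n c x = (\<lambda>a t. if a \<in> A \<and> t \<in> \<Phi> a
            then \<Sum>e\<in>{e. c e \<noteq> 0}. c e * exp_monomial (\<lambda>i. exp (\<sigma> i)) n e t else 0)"
proof (intro ext)
  fix a t
  show "poly_eval n c x a t = (if a \<in> A \<and> t \<in> \<Phi> a
            then \<Sum>e\<in>{e. c e \<noteq> 0}. c e * exp_monomial (\<lambda>i. exp (\<sigma> i)) n e t else 0)"
  proof (cases "a \<in> A \<and> t \<in> \<Phi> a")
    case True
    then have "x i a t = generator (\<sigma> i) t" if "i < n" for i
      using x that by (simp add: generator_net_def)
    then show ?thesis
      using True unfolding poly_eval_def prod_generator_power[symmetric] by simp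
  next
    case False
    have "(\<Prod>i<n. x i a t ^ e i) = 0" if "c e \<noteq> 0" for e
    proof -
      have "e \<noteq> (\<lambda>_. 0)" and e_supp: "\<forall>i\<ge>n. e i = 0"
        using \<open>poly_nc n c\<close> that unfolding poly_nc_def by auto
      then obtain i where "e i \<noteq> 0" by (meson ext)
      moreover from this have "i < n" using e_supp by (meson leI)
      ultimately show ?thesis using x False by (intro prod_zero bexI[of _ i]) (auto simp: generator_net_def)
    qed
    then have "poly_eval n c x a t = 0" unfolding poly_eval_def by (intro sum.neutral) simp
    then show ?thesis by (subst if_not_P[OF False])
  qed
qed

lemma not_AE_zero_if_nonzero_near_0:
  fixes g :: "real \<Rightarrow> real"
  assumes "\<delta> > 0" and "\<forall>t. 0 < t \<and> t < \<delta> \<longrightarrow> g t \<noteq> 0"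
  shows "\<not> (AE t in lebesgue_on {0..1}. g t = 0)"
proof
  assume "AE t in lebesgue_on {0..1}. g t = 0"
  then obtain N where N: "{t \<in> space (lebesgue_on {0..1}). g t \<noteq> 0} \<subseteq> N"
    "emeasure (lebesgue_on {0..1}) N = 0" "N \<in> sets (lebesgue_on {0..1})"
    by (rule AE_E)
  define \<delta>' where "\<delta>' = min \<delta> 1"
  have "{0<..<\<delta>'} \<subseteq> N" using N(1) assms unfolding \<delta>'_def by auto
  then have "emeasure (lebesgue_on {0..1}) {0<..<\<delta>'} = 0"
    using emeasure_mono[OF _ N(3)] N(2) by (metis le_zero_eq)
  moreover have "emeasure (lebesgue_on {0..1}) {0<..<\<delta>'} = emeasure lebesgue {0<..<\<delta>'}"
    unfolding \<delta>'_def by (intro emeasure_restrict_space) auto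
  ultimately show False using assms(1) unfolding \<delta>'_def by (simp add: emeasure_completion)
qed

lemma integral_abs_pos:
  fixes g :: "'a \<Rightarrow> real"
  assumes "integrable M g" and "\<not> (AE t in M. g t = 0)"
  shows "integral\<^sup>L M (\<lambda>t. \<bar>g t\<bar>) > 0"
proof -
  have "integral\<^sup>L M (\<lambda>t. \<bar>g t\<bar>) \<noteq> 0"
    using assms by (subst integral_nonneg_eq_0_iff_AE) auto
  then show ?thesis by (simp add: less_le)
qed

lemma not_net_tendsto_const:
  assumes "\<And>a. a \<in> A \<Longrightarrow> R a a" and "\<And>a. a \<in> A \<Longrightarrow> x a = K" and "K \<noteq> l"
  shows "\<not> net_tendsto A R x l"
proof
  assume "net_tendsto A R x l"
  moreover have "\<bar>K - l\<bar> > 0" using assms(3) by simp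
  ultimately obtain a where "a \<in> A" "\<forall>a'\<in>A. R a a' \<longrightarrow> \<bar>x a' - l\<bar> < \<bar>K - l\<bar>"
    unfolding net_tendsto_def by blast
  then show False using assms(1,2) by fastforce
qed

lemma restricted_net_in_ND:
  fixes g :: "real \<Rightarrow> real"
  assumes cover: "null_cover (\<Phi> ` A)"
    and g_meas [measurable]: "g \<in> borel_measurable (lebesgue_on {0..1})" and g_bound: "\<forall>t. \<bar>g t\<bar> \<le> B"
    and g_nz: "\<not> (AE t in lebesgue_on {0..1}. g t = 0)"
  shows "(\<lambda>a t. if a \<in> A \<and> t \<in> \<Phi> a then g t else 0) \<in> ND A (\<lambda>a b. \<Phi> a \<subseteq> \<Phi> b)"
    (is "?f \<in> _")
proof -
  have \<Phi>_null: "\<Phi> a \<in> null_sets (lebesgue_on {0..1})" if "a \<in> A" for a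
    using cover that unfolding null_cover_def by (subst null_sets_restrict_space) auto
  have f_meas [measurable]: "?f a \<in> borel_measurable (lebesgue_on {0..1})" for a
  proof (cases "a \<in> A")
    case True
    then have "?f a = (\<lambda>t. if t \<in> \<Phi> a then g t else 0)" by auto
    moreover have "\<Phi> a \<inter> space (lebesgue_on {0..1}) \<in> sets (lebesgue_on {0..1})"
      using \<Phi>_null[OF True] by (metis null_setsD2 sets.Int_space_eq2)
    then have "(\<lambda>t. if t \<in> \<Phi> a then g t else 0) \<in> borel_measurable (lebesgue_on {0..1})"
      by (intro measurable_If_set g_meas borel_measurable_const)
    ultimately show ?thesis by simp
  qed simp
  have fin: "finite_measure (lebesgue_on {0..1::real})" by (rule finite_measure_lebesgue_on) simp
  have g_int: "integrable (lebesgue_on {0..1}) g"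
    using g_bound by (intro finite_measure.integrable_const_bound[OF fin, of _ B] AE_I2 g_meas) auto
  define K where "K = integral\<^sup>L (lebesgue_on {0..1}) (\<lambda>t. \<bar>g t\<bar>)"
  have "K > 0" unfolding K_def by (rule integral_abs_pos[OF g_int g_nz])
  have dist: "integral\<^sup>L (lebesgue_on {0..1}) (\<lambda>t. \<bar>?f a t - g t\<bar>) = K" if "a \<in> A" for a
    unfolding K_def
  proof (rule integral_cong_AE)
    show "AE t in lebesgue_on {0..1}. \<bar>?f a t - g t\<bar> = \<bar>g t\<bar>"
      using AE_not_in[OF \<Phi>_null[OF that]] by (rule eventually_mono) simp
    show "(\<lambda>t. \<bar>?f a t - g t\<bar>) \<in> borel_measurable (lebesgue_on {0..1})" by measurable
  qed measurable
  show ?thesis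
    unfolding ND_def
  proof (intro CollectI conjI ballI exI)
    show "integrable (lebesgue_on {0..1}) (\<lambda>t::real. B)"
      by (rule finite_measure.integrable_const[OF fin])
    show "AE t in lebesgue_on {0..1}. \<bar>?f a t\<bar> \<le> B" for a
      using g_bound order_trans[OF abs_ge_zero g_bound[rule_format]] by (intro AE_I2) auto
    show "AE t in lebesgue_on {0..1}. net_tendsto A (\<lambda>a b. \<Phi> a \<subseteq> \<Phi> b) (\<lambda>a. ?f a t) (g t)"
    proof (rule AE_I2)
      fix t assume "t \<in> space (lebesgue_on {0..1::real})"
      then obtain a0 where "a0 \<in> A" "t \<in> \<Phi> a0" using cover unfolding null_cover_def by auto
      then show "net_tendsto A (\<lambda>a b. \<Phi> a \<subseteq> \<Phi> b) (\<lambda>a. ?f a t) (g t)"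
        unfolding net_tendsto_def by auto
    qed
    show "\<not> net_tendsto A (\<lambda>a b. \<Phi> a \<subseteq> \<Phi> b)
             (\<lambda>a. integral\<^sup>L (lebesgue_on {0..1}) (\<lambda>t. \<bar>?f a t - g t\<bar>)) 0"
      by (rule not_net_tendsto_const) (use dist \<open>K > 0\<close> in auto)
  qed (rule f_meas g_int)+
qed

lemma restricted_net_in_net_algebra:
  assumes "null_cover (\<Phi> ` A)"
  shows "(\<lambda>a t. if a \<in> A \<and> t \<in> \<Phi> a then g t else 0) \<in> net_algebra A"
  using assms unfolding null_cover_def net_algebra_def by fastforce

lemma poly_eval_generator_net_in_ND:
  assumes cover: "null_cover (\<Phi> ` A)"
    and \<sigma>: "\<forall>i<n. x i = generator_net A \<Phi> (\<sigma> i)" "inj_on \<sigma> {..<n}"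
    and c: "poly_nc n c" "c \<noteq> (\<lambda>_. 0)"
  shows "poly_eval n c x \<in> ND A (\<lambda>a b. \<Phi> a \<subseteq> \<Phi> b) \<inter> net_algebra A"
    and "poly_eval n c x \<noteq> (\<lambda>_ _. 0)"
proof -
  have \<rho>: "inj_on (\<lambda>i. exp (\<sigma> i)) {..<n}" "\<forall>i<n. exp (\<sigma> i) > 0"
    using \<sigma>(2) unfolding inj_on_def by auto
  define E where "E = {e. c e \<noteq> 0}"
  define P where "P t = (\<Sum>e\<in>E. c e * exp_monomial (\<lambda>i. exp (\<sigma> i)) n e t)" for t
  have E: "finite E" "\<forall>e\<in>E. c e \<noteq> 0" "\<forall>e\<in>E. \<forall>i\<ge>n. e i = 0"
    using c(1) unfolding E_def poly_nc_def by auto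
  have E_ne: "E \<noteq> {}" using c(2) unfolding E_def by auto
  have P_eval: "poly_eval n c x = (\<lambda>a t. if a \<in> A \<and> t \<in> \<Phi> a then P t else 0)"
    unfolding P_def E_def by (rule poly_eval_generator_net[OF \<sigma>(1) c(1)])
  have P_bound: "\<forall>t. \<bar>P t\<bar> \<le> (\<Sum>e\<in>E. \<bar>c e\<bar>)"
    unfolding P_def by (intro allI order_trans[OF sum_abs] sum_mono)
      (simp add: abs_mult abs_of_pos exp_monomial_pos exp_monomial_le_1 mult_left_le)
  have P_meas: "P \<in> borel_measurable (lebesgue_on {0..1})" unfolding P_def by measurable
  obtain \<delta> where "\<delta> > 0" "\<forall>t. 0 < t \<and> t < \<delta> \<longrightarrow> P t \<noteq> 0"
    using exp_monomial_lincomb_nonzero_near_0[OF E(1) E_ne E(2,3) \<rho>] unfolding P_def by blast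
  then have P_nz: "\<not> (AE t in lebesgue_on {0..1}. P t = 0)"
    by (rule not_AE_zero_if_nonzero_near_0)
  show "poly_eval n c x \<in> ND A (\<lambda>a b. \<Phi> a \<subseteq> \<Phi> b) \<inter> net_algebra A"
    unfolding P_eval using restricted_net_in_ND[OF cover P_meas P_bound P_nz]
      restricted_net_in_net_algebra[OF cover] by blast
  obtain t where "t \<in> {0..1}" "P t \<noteq> 0"
  proof (rule ccontr)
    assume "\<not> thesis"
    with that have "AE t in lebesgue_on {0..1}. P t = 0" by (intro AE_I2) auto
    with P_nz show False by blast
  qed
  moreover have "{0..1} \<subseteq> \<Union>(\<Phi> ` A)" using cover unfolding null_cover_def by (elim conjE)
  ultimately obtain a where "poly_eval n c x a t \<noteq> 0" unfolding P_eval by auto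
  then show "poly_eval n c x \<noteq> (\<lambda>_ _. 0)" by auto
qed

lemma strongly_algebrable_ND:
  assumes cover: "null_cover (\<Phi> ` A)"
  shows "strongly_algebrable (net_algebra A) (ND A (\<lambda>a b. \<Phi> a \<subseteq> \<Phi> b) \<inter> net_algebra A)
           (UNIV :: real set)"
proof -
  have inj: "inj (generator_net A \<Phi>)"
  proof (rule injI)
    fix s s' assume eq: "generator_net A \<Phi> s = generator_net A \<Phi> s'"
    have "(1/2::real) \<in> {0..1}" by simp
    then obtain a where "a \<in> A" "1/2 \<in> \<Phi> a" using cover unfolding null_cover_def by blast
    then have "generator s (1/2) = generator s' (1/2)"
      using fun_cong[OF fun_cong[OF eq, of a], of "1/2"] unfolding generator_net_def by simp
    then show "s = s'" unfolding generator_half_eq_iff .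
  qed
  have "poly_eval n c x \<in> ND A (\<lambda>a b. \<Phi> a \<subseteq> \<Phi> b) \<inter> net_algebra A \<and> poly_eval n c x \<noteq> (\<lambda>_ _. 0)"
    if x: "x ` {..<n} \<subseteq> range (generator_net A \<Phi>)" "inj_on x {..<n}"
      and c: "poly_nc n c" "c \<noteq> (\<lambda>_. 0)" for n x c
  proof -
    have "\<forall>i<n. \<exists>s. x i = generator_net A \<Phi> s" using x(1) by auto
    then obtain \<sigma> where \<sigma>: "\<forall>i<n. x i = generator_net A \<Phi> (\<sigma> i)" by metis
    have "inj_on \<sigma> {..<n}"
    proof (rule inj_onI)
      fix i j assume "i \<in> {..<n}" "j \<in> {..<n}" "\<sigma> i = \<sigma> j"
      then show "i = j" using \<sigma> inj_onD[OF x(2)] by simp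
    qed
    then show ?thesis using poly_eval_generator_net_in_ND[OF cover \<sigma> _ c] by blast
  qed
  moreover have "range (generator_net A \<Phi>) \<subseteq> net_algebra A"
    using restricted_net_in_net_algebra[OF cover] unfolding generator_net_def by blast
  moreover have "range (generator_net A \<Phi>) \<approx> (UNIV :: real set)"
    by (rule inj_on_image_eqpoll_self[OF inj])
  ultimately show ?thesis unfolding strongly_algebrable_def by blast
qed

theorem mainTheorem4:
  shows "\<exists>(A :: real set) (le :: real \<Rightarrow> real \<Rightarrow> bool).
     directed_set A le
     \<and> \<not> card_order_on A (dir_rel A le)
     \<and> card_eq_covN A
     \<and> strongly_algebrable (net_algebra A) (ND A le \<inter> net_algebra A) (UNIV :: real set)"
proof -
  obtain A :: "real set" and \<Phi> where cover: "null_cover (\<Phi> ` A)"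
    and directed: "\<forall>a\<in>A. \<forall>b\<in>A. \<exists>c\<in>A. \<Phi> a \<union> \<Phi> b \<subseteq> \<Phi> c"
    and not_inj: "\<not> inj_on \<Phi> A" and size: "card_eq_covN A"
    using exists_directed_null_cover_of_size_covN by blast
  have "A \<noteq> {}" using cover null_cover_infinite by fastforce
  show ?thesis
  proof (intro exI conjI)
    show "directed_set A (\<lambda>a b. \<Phi> a \<subseteq> \<Phi> b)"
      by (rule directed_set_inclusion_order[OF \<open>A \<noteq> {}\<close> directed])
    show "\<not> card_order_on A (dir_rel A (\<lambda>a b. \<Phi> a \<subseteq> \<Phi> b))"
      by (rule not_card_order_inclusion_order[OF not_inj])
    show "strongly_algebrable (net_algebra A) (ND A (\<lambda>a b. \<Phi> a \<subseteq> \<Phi> b) \<inter> net_algebra A)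
        (UNIV :: real set)"
      by (rule strongly_algebrable_ND[OF cover])
  qed (rule size)
qed

end
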